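(* Let $1\to N\to G\xrightarrow{q}Q\to 1$ be a short exact sequence of groups, let $S$ be a generating set of $G$ and let $\mathcal{P}$ be a family of proper subgroups of $G$ such that every $P\in\mathcal{P}$ either contains $N$ or contains $S\setminus N$. Then $$\operatorname{CC}(G,\mathcal{P})\simeq\operatorname{CC}(Q,\overline{\mathcal{P}})\ast\operatorname{CC}(N,\mathcal{P}\cap N),$$ where $\overline{\mathcal{P}}=\{q(P): P\in\mathcal{P},\ N\subseteq P\}$ and $\mathcal{P}\cap N=\{P\cap N: P\in\mathcal{P},\ S\setminus N\subseteq P\}$.
   Context: For a group $G$ and a family $\mathcal{K}$ of subgroups, the coset complex $\operatorname{CC}(G,\mathcal{K})$ is the simplicial complex whose vertices are the cosets $gK$ ($g\in G$, $K\in\mathcal{K}$; cosets of different members of $\mathcal{K}$ are different vertices) and where a finite set of vertices spans a simplex iff the cosets have nonempty common intersection. Homotopy equivalence and the join $\ast$ refer to geometric realisations. *)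

theory Defs
  imports "HOL-Analysis.Analysis" "HOL-Algebra.Algebra"
begin

text \<open>Abstract simplicial complexes are given as sets of (finite, nonempty) simplices.\<close>

text \<open>Coset complex CC(G,K): vertices are pairs (K, gK) with K in the family, so that
  cosets of different members of the family are different vertices; a finite nonempty
  set of vertices is a simplex iff the cosets have nonempty common intersection.\<close>
definition coset_complex :: "('a, 'm) monoid_scheme \<Rightarrow> 'a set set \<Rightarrow> ('a set \<times> 'a set) set set" where
  "coset_complex G \<K> =
     {\<sigma>. finite \<sigma> \<and> \<sigma> \<noteq> {} \<and>
          \<sigma> \<subseteq> {(K, g <#\<^bsub>G\<^esub> K) | g K. g \<in> carrier G \<and> K \<in> \<K>} \<and>
          \<Inter> (snd ` \<sigma>) \<noteq> {}}"

definition simplicial_join :: "'u set set \<Rightarrow> 'v set set \<Rightarrow> ('u + 'v) set set" where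
  "simplicial_join K L =
     {s. s \<noteq> {} \<and> Inl -` s \<in> insert {} K \<and> Inr -` s \<in> insert {} L}"

text \<open>Geometric realisation: finitely supported barycentric coordinate functions whose
  support is a simplex, with the weak (coherent) topology w.r.t. the closed simplices,
  each carrying its standard Euclidean topology.\<close>
definition geom_points :: "'v set set \<Rightarrow> ('v \<Rightarrow> real) set" where
  "geom_points K = {f. (\<forall>v. 0 \<le> f v) \<and> {v. f v \<noteq> 0} \<in> K \<and> sum f {v. f v \<noteq> 0} = 1}"

definition closed_simplex :: "'v set \<Rightarrow> ('v \<Rightarrow> real) set" where
  "closed_simplex \<sigma> = {f. (\<forall>v. 0 \<le> f v) \<and> (\<forall>v. v \<notin> \<sigma> \<longrightarrow> f v = 0) \<and> sum f \<sigma> = 1}"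

definition geom_realisation :: "'v set set \<Rightarrow> ('v \<Rightarrow> real) topology" where
  "geom_realisation K = topology (\<lambda>U. U \<subseteq> geom_points K \<and>
      (\<forall>\<sigma>\<in>K. openin (subtopology (powertop_real UNIV) (closed_simplex \<sigma>)) (U \<inter> closed_simplex \<sigma>)))"

end

theory Submission
  imports Defs
begin

text \<open>Put \<open>H = \<langle>S - N\<rangle>\<close>. Since \<open>S \<subseteq> N \<union> H\<close> and \<open>N\<close> is normal, \<open>G = N H\<close>; in particular
  \<open>q(H) = Q\<close>. Every \<open>P \<in> \<P>\<close> contains \<open>N\<close> or \<open>H\<close>. In the first case \<open>g P\<close> is the full preimage of
  \<open>q(g) q(P)\<close>; in the second, \<open>g P\<close> meets \<open>N\<close> and equals \<open>(g P \<inter> N) H\<close>. Hence sending a vertex to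
  its image in \<open>Q\<close>, respectively to its trace on \<open>N\<close>, is injective, with image the vertex set of
  the join. Moreover, for \<open>m \<in> N\<close> and \<open>h \<in> H\<close>, whether \<open>m h \<in> g P\<close> depends only on \<open>q(h)\<close> in the
  first case and only on \<open>m\<close> in the second; so a set of vertices has a common point iff the images
  of those of the first kind have one and the traces of those of the second kind have one. Thus
  \<open>CC(G, \<P>)\<close> is isomorphic to the join, and the realisations are even homeomorphic.\<close>

definition downward_closed :: "'v set set \<Rightarrow> bool" where
  "downward_closed K \<longleftrightarrow> (\<forall>\<sigma>\<in>K. \<forall>\<tau>. \<tau> \<subseteq> \<sigma> \<and> \<tau> \<noteq> {} \<longrightarrow> \<tau> \<in> K)"

lemma downward_closedD: "downward_closed K \<Longrightarrow> \<sigma> \<in> K \<Longrightarrow> \<tau> \<subseteq> \<sigma> \<Longrightarrow> \<tau> \<noteq> {} \<Longrightarrow> \<tau> \<in> K"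
  unfolding downward_closed_def by blast

lemma downward_closed_image:
  assumes "downward_closed K" "inj_on \<phi> (\<Union>K)"
  shows "downward_closed ((`) \<phi> ` K)"
  unfolding downward_closed_def
proof (intro ballI allI impI)
  fix s \<tau> assume "s \<in> (`) \<phi> ` K" and \<tau>: "\<tau> \<subseteq> s \<and> \<tau> \<noteq> {}"
  then obtain \<sigma> where \<sigma>: "\<sigma> \<in> K" "s = \<phi> ` \<sigma>" by auto
  have \<tau>_eq: "\<tau> = \<phi> ` (\<sigma> \<inter> \<phi> -` \<tau>)" using \<tau> \<sigma>(2) by blast
  then have "\<sigma> \<inter> \<phi> -` \<tau> \<noteq> {}" using \<tau> by blast
  then have "\<sigma> \<inter> \<phi> -` \<tau> \<in> K" by (rule downward_closedD[OF assms(1) \<sigma>(1) Int_lower1])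
  with \<tau>_eq show "\<tau> \<in> (`) \<phi> ` K" by (rule image_eqI)
qed

lemma image_family_eqI:
  assumes "\<Union>K \<subseteq> V" "\<Union>L \<subseteq> f ` V" and corr: "\<And>\<sigma>. \<sigma> \<subseteq> V \<Longrightarrow> \<sigma> \<in> K \<longleftrightarrow> f ` \<sigma> \<in> L"
  shows "(`) f ` K = L"
proof
  show "(`) f ` K \<subseteq> L" using assms(1) corr by blast
  show "L \<subseteq> (`) f ` K"
  proof
    fix \<tau> assume "\<tau> \<in> L"
    moreover have "\<tau> = f ` (V \<inter> f -` \<tau>)" using \<open>\<tau> \<in> L\<close> assms(2) by blast
    ultimately have "V \<inter> f -` \<tau> \<in> K" using corr[of "V \<inter> f -` \<tau>"] by simp
    with \<open>\<tau> = f ` (V \<inter> f -` \<tau>)\<close> show "\<tau> \<in> (`) f ` K" by (rule image_eqI)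
  qed
qed

lemma finite_iff_vimage_Inl_Inr: "finite T \<longleftrightarrow> finite (Inl -` T) \<and> finite (Inr -` T)"
proof
  assume "finite (Inl -` T) \<and> finite (Inr -` T)"
  moreover have "T \<subseteq> Inl ` (Inl -` T) \<union> Inr ` (Inr -` T)"
  proof
    fix t assume "t \<in> T"
    then show "t \<in> Inl ` (Inl -` T) \<union> Inr ` (Inr -` T)" by (cases t) auto
  qed
  ultimately show "finite T" using finite_subset by blast
qed (simp add: finite_vimageI)

lemma Inter_nonempty_obtain_in:
  assumes "\<Inter>(f ` A) \<noteq> {}" and "\<And>a. a \<in> A \<Longrightarrow> f a \<subseteq> C" and "c \<in> C"
  obtains x where "x \<in> C" "\<And>a. a \<in> A \<Longrightarrow> x \<in> f a"
proof (cases "A = {}")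
  case True
  then show ?thesis using that assms(3) by blast
next
  case False
  then obtain a0 where "a0 \<in> A" by blast
  obtain x where "x \<in> \<Inter>(f ` A)" using assms(1) by blast
  then show ?thesis using that assms(2) \<open>a0 \<in> A\<close> by blast
qed

section \<open>Geometric realisations\<close>

lemma openin_geom_realisation:
  "openin (geom_realisation K) U \<longleftrightarrow> U \<subseteq> geom_points K \<and>
      (\<forall>\<sigma>\<in>K. openin (subtopology (powertop_real UNIV) (closed_simplex \<sigma>)) (U \<inter> closed_simplex \<sigma>))"
proof -
  define coherent where "coherent U \<longleftrightarrow>
    (\<forall>\<sigma>\<in>K. openin (subtopology (powertop_real UNIV) (closed_simplex \<sigma>)) (U \<inter> closed_simplex \<sigma>))" for U
  have "coherent (S \<inter> T)" if "coherent S" "coherent T" for S T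
  proof -
    have "S \<inter> T \<inter> closed_simplex \<sigma> = (S \<inter> closed_simplex \<sigma>) \<inter> (T \<inter> closed_simplex \<sigma>)" for \<sigma> by blast
    then show ?thesis using that unfolding coherent_def by (simp add: openin_Int)
  qed
  moreover have "coherent (\<Union>\<U>)" if "\<forall>S\<in>\<U>. coherent S" for \<U>
    unfolding coherent_def
  proof
    fix \<sigma> assume "\<sigma> \<in> K"
    have "\<Union>\<U> \<inter> closed_simplex \<sigma> = (\<Union>S\<in>\<U>. S \<inter> closed_simplex \<sigma>)" by blast
    also have "openin (subtopology (powertop_real UNIV) (closed_simplex \<sigma>)) \<dots>"
      using that \<open>\<sigma> \<in> K\<close> unfolding coherent_def by (intro openin_Union) auto
    finally show "openin (subtopology (powertop_real UNIV) (closed_simplex \<sigma>)) (\<Union>\<U> \<inter> closed_simplex \<sigma>)" .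
  qed
  ultimately have "istopology (\<lambda>U. U \<subseteq> geom_points K \<and> coherent U)"
    unfolding istopology_def by blast
  then show ?thesis
    unfolding coherent_def by (simp only: geom_realisation_def topology_inverse')
qed

lemma closed_simplex_support:
  assumes "f \<in> closed_simplex \<sigma>"
  shows "{v. f v \<noteq> 0} \<subseteq> \<sigma>" "{v. f v \<noteq> 0} \<noteq> {}" "sum f {v. f v \<noteq> 0} = 1"
proof -
  show supp: "{v. f v \<noteq> 0} \<subseteq> \<sigma>" using assms unfolding closed_simplex_def by auto
  have "finite \<sigma>"
  proof (rule ccontr)
    assume "infinite \<sigma>"
    then show False using assms unfolding closed_simplex_def by simp
  qed
  then have "sum f {v. f v \<noteq> 0} = sum f \<sigma>"
    using supp by (intro sum.mono_neutral_left) auto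
  then show "sum f {v. f v \<noteq> 0} = 1" using assms unfolding closed_simplex_def by simp
  then show "{v. f v \<noteq> 0} \<noteq> {}" by (metis sum.empty zero_neq_one)
qed

lemma geom_points_eq_Union_closed_simplex:
  assumes "downward_closed K"
  shows "geom_points K = (\<Union>\<sigma>\<in>K. closed_simplex \<sigma>)"
proof
  show "geom_points K \<subseteq> (\<Union>\<sigma>\<in>K. closed_simplex \<sigma>)"
  proof
    fix f assume f: "f \<in> geom_points K"
    then have "f \<in> closed_simplex {v. f v \<noteq> 0}" unfolding geom_points_def closed_simplex_def by auto
    then show "f \<in> (\<Union>\<sigma>\<in>K. closed_simplex \<sigma>)" using f unfolding geom_points_def by auto
  qed
  show "(\<Union>\<sigma>\<in>K. closed_simplex \<sigma>) \<subseteq> geom_points K"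
  proof
    fix f assume "f \<in> (\<Union>\<sigma>\<in>K. closed_simplex \<sigma>)"
    then obtain \<sigma> where \<sigma>: "\<sigma> \<in> K" "f \<in> closed_simplex \<sigma>" by auto
    then have "{v. f v \<noteq> 0} \<in> K"
      using downward_closedD[OF assms] closed_simplex_support[OF \<sigma>(2)] by blast
    then show "f \<in> geom_points K"
      using \<sigma>(2) closed_simplex_support[OF \<sigma>(2)] unfolding geom_points_def closed_simplex_def by auto
  qed
qed

lemma topspace_geom_realisation:
  assumes "downward_closed K"
  shows "topspace (geom_realisation K) = geom_points K"
proof
  show "topspace (geom_realisation K) \<subseteq> geom_points K"
    unfolding topspace_def openin_geom_realisation by auto
  have "geom_points K \<inter> closed_simplex \<sigma> = closed_simplex \<sigma>" if "\<sigma> \<in> K" for \<sigma>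
    using that geom_points_eq_Union_closed_simplex[OF assms] by auto
  then have "openin (geom_realisation K) (geom_points K)"
    unfolding openin_geom_realisation by (simp add: openin_subtopology_refl)
  then show "geom_points K \<subseteq> topspace (geom_realisation K)"
    by (rule openin_subset)
qed

lemma geom_points_vanish_outside:
  assumes "f \<in> geom_points K" "v \<notin> \<Union>K"
  shows "f v = 0"
  using assms unfolding geom_points_def by blast

lemma continuous_map_geom_realisation:
  assumes K: "downward_closed K" and L: "downward_closed L"
    and cont: "continuous_map (powertop_real UNIV) (powertop_real UNIV) h"
    and simplices: "\<And>\<sigma>. \<sigma> \<in> K \<Longrightarrow> \<exists>\<tau>\<in>L. h ` closed_simplex \<sigma> \<subseteq> closed_simplex \<tau>"
  shows "continuous_map (geom_realisation K) (geom_realisation L) h"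
  unfolding continuous_map_def
proof (intro conjI allI impI)
  show "h \<in> topspace (geom_realisation K) \<rightarrow> topspace (geom_realisation L)"
    unfolding topspace_geom_realisation[OF K] topspace_geom_realisation[OF L]
      geom_points_eq_Union_closed_simplex[OF K] geom_points_eq_Union_closed_simplex[OF L]
    using simplices by fastforce
next
  fix U assume U: "openin (geom_realisation L) U"
  show "openin (geom_realisation K) {x \<in> topspace (geom_realisation K). h x \<in> U}"
    unfolding openin_geom_realisation
  proof (intro conjI ballI)
    show "{x \<in> topspace (geom_realisation K). h x \<in> U} \<subseteq> geom_points K"
      using topspace_geom_realisation[OF K] by auto
  next
    fix \<sigma> assume "\<sigma> \<in> K"
    then obtain \<tau> where \<tau>: "\<tau> \<in> L" "h ` closed_simplex \<sigma> \<subseteq> closed_simplex \<tau>" using simplices by blast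
    have "continuous_map (subtopology (powertop_real UNIV) (closed_simplex \<sigma>))
        (subtopology (powertop_real UNIV) (closed_simplex \<tau>)) h"
      using \<tau>(2) cont by (auto simp: continuous_map_in_subtopology continuous_map_from_subtopology)
    moreover have "openin (subtopology (powertop_real UNIV) (closed_simplex \<tau>)) (U \<inter> closed_simplex \<tau>)"
      using U \<tau>(1) unfolding openin_geom_realisation by blast
    moreover have "{x \<in> topspace (geom_realisation K). h x \<in> U} \<inter> closed_simplex \<sigma> =
        {x \<in> topspace (subtopology (powertop_real UNIV) (closed_simplex \<sigma>)). h x \<in> U \<inter> closed_simplex \<tau>}"
      using \<tau>(2) \<open>\<sigma> \<in> K\<close>
      unfolding topspace_geom_realisation[OF K] geom_points_eq_Union_closed_simplex[OF K] by auto
    ultimately show "openin (subtopology (powertop_real UNIV) (closed_simplex \<sigma>))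
        ({x \<in> topspace (geom_realisation K). h x \<in> U} \<inter> closed_simplex \<sigma>)"
      using openin_continuous_map_preimage by fastforce
  qed
qed

definition pullback_weights :: "('v \<Rightarrow> 'w) \<Rightarrow> 'v set \<Rightarrow> ('w \<Rightarrow> real) \<Rightarrow> 'v \<Rightarrow> real" where
  "pullback_weights \<psi> D f = (\<lambda>v. if v \<in> D then f (\<psi> v) else 0)"

lemma continuous_map_pullback_weights:
  "continuous_map (powertop_real UNIV) (powertop_real UNIV) (pullback_weights \<psi> D)"
  unfolding continuous_map_componentwise_UNIV pullback_weights_def
  using continuous_map_product_projection[of _ UNIV "\<lambda>_. euclideanreal"] by auto

lemma pullback_weights_closed_simplex:
  assumes bij: "bij_betw \<psi> \<tau> \<sigma>" and "\<tau> \<subseteq> D" and outside: "\<And>v. v \<in> D - \<tau> \<Longrightarrow> \<psi> v \<notin> \<sigma>"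
  shows "pullback_weights \<psi> D ` closed_simplex \<sigma> \<subseteq> closed_simplex \<tau>"
proof
  fix g assume "g \<in> pullback_weights \<psi> D ` closed_simplex \<sigma>"
  then obtain f where f: "f \<in> closed_simplex \<sigma>" and g: "g = pullback_weights \<psi> D f" by auto
  have "sum g \<tau> = sum (f \<circ> \<psi>) \<tau>"
    using \<open>\<tau> \<subseteq> D\<close> unfolding g pullback_weights_def by (intro sum.cong) auto
  also have "\<dots> = sum f \<sigma>" using sum.reindex_bij_betw[OF bij] by simp
  finally show "g \<in> closed_simplex \<tau>"
    using f outside unfolding g pullback_weights_def closed_simplex_def by auto
qed

lemma continuous_map_pullback_inv_into:
  assumes K: "downward_closed K" and inj: "inj_on \<phi> (\<Union>K)"
  shows "continuous_map (geom_realisation K) (geom_realisation ((`) \<phi> ` K))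
           (pullback_weights (inv_into (\<Union>K) \<phi>) (\<phi> ` \<Union>K))"
proof -
  define V where "V = \<Union>K"
  have injV: "inj_on \<phi> V" using inj unfolding V_def .
  have "continuous_map (geom_realisation K) (geom_realisation ((`) \<phi> ` K))
      (pullback_weights (inv_into V \<phi>) (\<phi> ` V))"
  proof (rule continuous_map_geom_realisation[OF K downward_closed_image[OF K inj]])
    fix \<sigma> assume "\<sigma> \<in> K"
    then have "\<sigma> \<subseteq> V" unfolding V_def by blast
    then have "bij_betw (inv_into V \<phi>) (\<phi> ` \<sigma>) \<sigma>"
      using bij_betw_inv_into_subset[OF inj_on_imp_bij_betw[OF injV] _ refl] by blast
    then have "pullback_weights (inv_into V \<phi>) (\<phi> ` V) ` closed_simplex \<sigma> \<subseteq> closed_simplex (\<phi> ` \<sigma>)"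
      using \<open>\<sigma> \<subseteq> V\<close> injV by (intro pullback_weights_closed_simplex) auto
    then show "\<exists>\<tau>\<in>(`) \<phi> ` K.
        pullback_weights (inv_into V \<phi>) (\<phi> ` V) ` closed_simplex \<sigma> \<subseteq> closed_simplex \<tau>"
      using \<open>\<sigma> \<in> K\<close> by blast
  qed (rule continuous_map_pullback_weights)
  then show ?thesis unfolding V_def .
qed

lemma continuous_map_pullback:
  assumes K: "downward_closed K" and inj: "inj_on \<phi> (\<Union>K)"
  shows "continuous_map (geom_realisation ((`) \<phi> ` K)) (geom_realisation K) (pullback_weights \<phi> (\<Union>K))"
proof (rule continuous_map_geom_realisation[OF downward_closed_image[OF K inj] K])
  fix \<tau> assume "\<tau> \<in> (`) \<phi> ` K"
  then obtain \<sigma> where \<sigma>: "\<sigma> \<in> K" "\<tau> = \<phi> ` \<sigma>" by blast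
  then have "\<sigma> \<subseteq> \<Union>K" by blast
  have bij: "bij_betw \<phi> \<sigma> \<tau>" using inj_on_subset[OF inj \<open>\<sigma> \<subseteq> \<Union>K\<close>] unfolding \<sigma>(2) bij_betw_def by blast
  have outside: "\<phi> v \<notin> \<tau>" if "v \<in> \<Union>K - \<sigma>" for v
    using that \<open>\<sigma> \<subseteq> \<Union>K\<close> inj unfolding \<sigma>(2) by (auto simp: inj_on_image_mem_iff)
  have "pullback_weights \<phi> (\<Union>K) ` closed_simplex \<tau> \<subseteq> closed_simplex \<sigma>"
    using pullback_weights_closed_simplex[OF bij \<open>\<sigma> \<subseteq> \<Union>K\<close> outside] .
  then show "\<exists>\<sigma>\<in>K. pullback_weights \<phi> (\<Union>K) ` closed_simplex \<tau> \<subseteq> closed_simplex \<sigma>"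
    using \<sigma>(1) by blast
qed (rule continuous_map_pullback_weights)

lemma homeomorphic_geom_realisation_image:
  assumes K: "downward_closed K" and inj: "inj_on \<phi> (\<Union>K)"
  shows "geom_realisation K homeomorphic_space geom_realisation ((`) \<phi> ` K)"
proof -
  define V where "V = \<Union>K"
  define F where "F = pullback_weights (inv_into V \<phi>) (\<phi> ` V)"
  define F' where "F' = pullback_weights \<phi> V"
  have injV: "inj_on \<phi> V" using inj unfolding V_def .
  have L: "downward_closed ((`) \<phi> ` K)" using downward_closed_image[OF K inj] .
  have UL: "\<Union>((`) \<phi> ` K) = \<phi> ` V" unfolding V_def by blast
  have "F' (F f) = f" if "f \<in> topspace (geom_realisation K)" for f
    using that geom_points_vanish_outside[of f K] injV
    unfolding topspace_geom_realisation[OF K] F_def F'_def pullback_weights_def V_def by auto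
  moreover have "F (F' g) = g" if "g \<in> topspace (geom_realisation ((`) \<phi> ` K))" for g
    using that geom_points_vanish_outside[of g "(`) \<phi> ` K"] injV
    unfolding topspace_geom_realisation[OF L] F_def F'_def pullback_weights_def UL
    by (auto simp: fun_eq_iff inv_into_into f_inv_into_f)
  ultimately have "homeomorphic_maps (geom_realisation K) (geom_realisation ((`) \<phi> ` K)) F F'"
    using continuous_map_pullback_inv_into[OF K inj] continuous_map_pullback[OF K inj]
    unfolding homeomorphic_maps_def F_def F'_def V_def by blast
  then show ?thesis by (rule homeomorphic_maps_imp_homeomorphic_space)
qed

section \<open>Cosets\<close>

lemma (in group) mult_right_mem_l_coset_iff:
  assumes P: "subgroup P G" and g: "g \<in> carrier G" and x: "x \<in> carrier G" and h: "h \<in> P"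
  shows "x \<otimes> h \<in> g <# P \<longleftrightarrow> x \<in> g <# P"
proof
  have hG: "h \<in> carrier G" using subgroup.mem_carrier[OF P h] .
  show "x \<in> g <# P" if xh: "x \<otimes> h \<in> g <# P"
  proof -
    obtain p where p: "p \<in> P" "x \<otimes> h = g \<otimes> p" using xh unfolding l_coset_def by blast
    have pG: "p \<in> carrier G" using subgroup.mem_carrier[OF P p(1)] .
    have "x = (x \<otimes> h) \<otimes> inv h" using x hG by (simp add: m_assoc)
    also have "\<dots> = g \<otimes> (p \<otimes> inv h)" using p(2) g hG pG by (simp add: m_assoc)
    finally have "x = g \<otimes> (p \<otimes> inv h)" .
    moreover have "p \<otimes> inv h \<in> P" using P p(1) h by (simp add: subgroup.m_closed subgroup.m_inv_closed)
    ultimately show ?thesis unfolding l_coset_def by blast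
  qed
  show "x \<otimes> h \<in> g <# P" if xg: "x \<in> g <# P"
  proof -
    obtain p where p: "p \<in> P" "x = g \<otimes> p" using xg unfolding l_coset_def by blast
    have pG: "p \<in> carrier G" using subgroup.mem_carrier[OF P p(1)] .
    have "x \<otimes> h = g \<otimes> (p \<otimes> h)" using p(2) g hG pG by (simp add: m_assoc)
    moreover have "p \<otimes> h \<in> P" using P p(1) h by (simp add: subgroup.m_closed)
    ultimately show ?thesis unfolding l_coset_def by blast
  qed
qed

lemma (in group_hom) mem_l_coset_iff_image_mem:
  assumes P: "subgroup P G" and ker: "kernel G H h \<subseteq> P" and g: "g \<in> carrier G" and x: "x \<in> carrier G"
  shows "x \<in> g <# P \<longleftrightarrow> h x \<in> h ` (g <# P)"
proof
  assume "h x \<in> h ` (g <# P)"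
  then obtain y where y: "y \<in> g <# P" "h x = h y" by blast
  have yG: "y \<in> carrier G" using G.l_coset_carrier[OF y(1) g P] .
  have "inv y \<otimes> x \<in> kernel G H h"
    using y(2) yG x by (simp add: kernel_def)
  then have "y \<otimes> (inv y \<otimes> x) \<in> g <# P"
    using G.mult_right_mem_l_coset_iff[OF P g yG] ker y(1) by blast
  then show "x \<in> g <# P" using yG x by (simp add: G.m_assoc[symmetric])
qed simp

lemma (in group) l_coset_Int_subgroup:
  assumes P: "subgroup P G" and N: "subgroup N G" and n: "n \<in> N"
  shows "(n <# P) \<inter> N = n <# (P \<inter> N)"
proof -
  have nG: "n \<in> carrier G" using subgroup.mem_carrier[OF N n] .
  have "n \<otimes> p \<in> N \<longleftrightarrow> p \<in> N" if "p \<in> P" for p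
  proof
    have pG: "p \<in> carrier G" using subgroup.mem_carrier[OF P that] .
    assume "n \<otimes> p \<in> N"
    then have "inv n \<otimes> (n \<otimes> p) \<in> N" using N n by (simp add: subgroup.m_closed subgroup.m_inv_closed)
    then show "p \<in> N" using nG pG by (simp add: m_assoc[symmetric])
  qed (use N n in \<open>simp add: subgroup.m_closed\<close>)
  then show ?thesis unfolding l_coset_def by blast
qed

lemma (in group_hom) image_l_coset:
  assumes "P \<subseteq> carrier G" "g \<in> carrier G"
  shows "h ` (g <# P) = h g <#\<^bsub>H\<^esub> h ` P"
  using assms unfolding l_coset_def by (auto simp: subsetD image_iff)

definition coset_vertices :: "('a, 'm) monoid_scheme \<Rightarrow> 'a set set \<Rightarrow> ('a set \<times> 'a set) set" where
  "coset_vertices G \<K> = {(K, g <#\<^bsub>G\<^esub> K) | g K. g \<in> carrier G \<and> K \<in> \<K>}"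

lemma coset_complex_eq:
  "coset_complex G \<K> = {\<sigma>. finite \<sigma> \<and> \<sigma> \<noteq> {} \<and> \<sigma> \<subseteq> coset_vertices G \<K> \<and> \<Inter>(snd ` \<sigma>) \<noteq> {}}"
  unfolding coset_complex_def coset_vertices_def by (rule refl)

lemma insert_empty_coset_complex:
  "insert {} (coset_complex G \<K>) = {\<sigma>. finite \<sigma> \<and> \<sigma> \<subseteq> coset_vertices G \<K> \<and> \<Inter>(snd ` \<sigma>) \<noteq> {}}"
  unfolding coset_complex_eq by auto

lemma coset_complex_downward_closed: "downward_closed (coset_complex G \<K>)"
  unfolding downward_closed_def coset_complex_eq
proof (intro ballI allI impI)
  fix \<sigma> \<tau> assume \<sigma>: "\<sigma> \<in> {\<sigma>. finite \<sigma> \<and> \<sigma> \<noteq> {} \<and> \<sigma> \<subseteq> coset_vertices G \<K> \<and> \<Inter>(snd ` \<sigma>) \<noteq> {}}"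
    and \<tau>: "\<tau> \<subseteq> \<sigma> \<and> \<tau> \<noteq> {}"
  then have "\<Inter>(snd ` \<sigma>) \<subseteq> \<Inter>(snd ` \<tau>)" by blast
  with \<sigma> \<tau> show "\<tau> \<in> {\<sigma>. finite \<sigma> \<and> \<sigma> \<noteq> {} \<and> \<sigma> \<subseteq> coset_vertices G \<K> \<and> \<Inter>(snd ` \<sigma>) \<noteq> {}}"
    using finite_subset by auto
qed

section \<open>Coset complexes over an extension\<close>

locale dichotomous_family = group_hom G Q q
  for G :: "('a, 'm) monoid_scheme" and Q :: "('b, 'n) monoid_scheme" and q :: "'a \<Rightarrow> 'b" +
  fixes N S :: "'a set" and \<P> :: "'a set set"
  assumes surj: "q ` carrier G = carrier Q"
    and N_eq: "N = kernel G Q q"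
    and S_carrier: "S \<subseteq> carrier G" and S_generates: "generate G S = carrier G"
    and proper_subgroup: "P \<in> \<P> \<Longrightarrow> subgroup P G \<and> P \<noteq> carrier G"
    and dichotomy: "P \<in> \<P> \<Longrightarrow> N \<subseteq> P \<or> S - N \<subseteq> P"
begin

definition H :: "'a set" where "H = generate G (S - N)"

lemma N_subgroup: "subgroup N G"
  unfolding N_eq by (rule subgroup_kernel)

lemma N_normal: "N \<lhd> G"
  unfolding N_eq by (rule normal_kernel)

lemma mem_N_iff: "x \<in> N \<longleftrightarrow> x \<in> carrier G \<and> q x = \<one>\<^bsub>Q\<^esub>"
  unfolding N_eq kernel_def by simp

lemma H_subgroup: "subgroup H G"
  unfolding H_def using S_carrier by (intro G.generate_is_subgroup) blast

lemma subgroup_family: "P \<in> \<P> \<Longrightarrow> subgroup P G"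
  using proper_subgroup by blast

lemma H_subset: "P \<in> \<P> \<Longrightarrow> \<not> N \<subseteq> P \<Longrightarrow> H \<subseteq> P"
  unfolding H_def using dichotomy subgroup_family by (intro G.generate_subgroup_incl) blast+

lemma not_N_subset: "P \<in> \<P> \<Longrightarrow> S - N \<subseteq> P \<Longrightarrow> \<not> N \<subseteq> P"
proof
  assume P: "P \<in> \<P>" "S - N \<subseteq> P" "N \<subseteq> P"
  then have "generate G S \<subseteq> P"
    using subgroup_family[OF P(1)] by (intro G.generate_subgroup_incl) blast+
  then show False using S_generates proper_subgroup[OF P(1)] subgroup.subset by blast
qed

lemma N_H_decomposition:
  assumes "x \<in> carrier G"
  obtains m h where "m \<in> N" "h \<in> H" "x = m \<otimes>\<^bsub>G\<^esub> h"
proof -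
  interpret second_isomorphism_grp N G H
    using N_normal H_subgroup
    by (simp add: second_isomorphism_grp_def second_isomorphism_grp_axioms_def)
  have prod: "a \<otimes>\<^bsub>G\<^esub> b \<in> N <#>\<^bsub>G\<^esub> H" if "a \<in> N" "b \<in> H" for a b
    using that unfolding set_mult_def by blast
  have "S \<subseteq> N <#>\<^bsub>G\<^esub> H"
  proof
    fix s assume s: "s \<in> S"
    then have sG: "s \<in> carrier G" using S_carrier by blast
    show "s \<in> N <#>\<^bsub>G\<^esub> H"
    proof (cases "s \<in> N")
      case True
      then show ?thesis using prod[OF True subgroup.one_closed[OF H_subgroup]] sG by simp
    next
      case False
      then have "s \<in> H" unfolding H_def using s by (simp add: generate.incl)
      then show ?thesis using prod[OF subgroup.one_closed[OF N_subgroup]] sG by force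
    qed
  qed
  then have "generate G S \<subseteq> N <#>\<^bsub>G\<^esub> H"
    using normal_set_mult_subgroup by (rule G.generate_subgroup_incl)
  then have "x \<in> N <#>\<^bsub>G\<^esub> H" using assms S_generates by blast
  then show ?thesis using that unfolding set_mult_def by blast
qed

lemma image_H_eq_carrier: "q ` H = carrier Q"
proof
  show "q ` H \<subseteq> carrier Q" using subgroup.subset[OF H_subgroup] by auto
  show "carrier Q \<subseteq> q ` H"
  proof
    fix y assume "y \<in> carrier Q"
    then obtain x where x: "x \<in> carrier G" "y = q x" using surj by auto
    obtain m h where mh: "m \<in> N" "h \<in> H" "x = m \<otimes>\<^bsub>G\<^esub> h" using N_H_decomposition[OF x(1)] .
    have "q x = q h"
      using mh mem_N_iff subgroup.mem_carrier[OF H_subgroup] by simp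
    then show "y \<in> q ` H" using x(2) mh(2) by blast
  qed
qed

lemma coset_vertexE:
  assumes "v \<in> coset_vertices G \<P>"
  obtains g P where "g \<in> carrier G" "P \<in> \<P>" "v = (P, g <#\<^bsub>G\<^esub> P)"
  using assms unfolding coset_vertices_def by blast

lemma snd_coset_vertex_subset: "v \<in> coset_vertices G \<P> \<Longrightarrow> snd v \<subseteq> carrier G"
  by (elim coset_vertexE) (auto intro: G.l_coset_carrier subgroup_family)

lemma mult_mem_coset_vertex_iff:
  assumes v: "v \<in> coset_vertices G \<P>" and m: "m \<in> N" and h: "h \<in> H"
  shows "m \<otimes>\<^bsub>G\<^esub> h \<in> snd v \<longleftrightarrow> (if N \<subseteq> fst v then q h \<in> q ` snd v else m \<in> snd v)"
proof -
  obtain g P where gP: "g \<in> carrier G" "P \<in> \<P>" "v = (P, g <#\<^bsub>G\<^esub> P)" using v by (rule coset_vertexE)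
  have mG: "m \<in> carrier G" using subgroup.mem_carrier[OF N_subgroup m] .
  have hG: "h \<in> carrier G" using subgroup.mem_carrier[OF H_subgroup h] .
  show ?thesis
  proof (cases "N \<subseteq> P")
    case True
    have "q (m \<otimes>\<^bsub>G\<^esub> h) = q h" using m mG hG mem_N_iff by simp
    then show ?thesis
      using True gP mem_l_coset_iff_image_mem[OF subgroup_family[OF gP(2)], of g "m \<otimes>\<^bsub>G\<^esub> h"] mG hG
      unfolding N_eq[symmetric] by simp
  next
    case False
    then show ?thesis
      using gP G.mult_right_mem_l_coset_iff[OF subgroup_family[OF gP(2)] gP(1) mG] H_subset[OF gP(2)] h
      by auto
  qed
qed

lemma coset_eq_vimage_image:
  assumes P: "P \<in> \<P>" "N \<subseteq> P" and g: "g \<in> carrier G"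
  shows "g <#\<^bsub>G\<^esub> P = carrier G \<inter> q -` q ` (g <#\<^bsub>G\<^esub> P)"
  using mem_l_coset_iff_image_mem[OF subgroup_family[OF P(1)] _ g] P(2)
    G.l_coset_carrier[OF _ g subgroup_family[OF P(1)]]
  unfolding N_eq by blast

lemma coset_eq_Int_N_mult_H:
  assumes P: "P \<in> \<P>" "\<not> N \<subseteq> P" and g: "g \<in> carrier G"
  shows "g <#\<^bsub>G\<^esub> P = ((g <#\<^bsub>G\<^esub> P) \<inter> N) <#>\<^bsub>G\<^esub> H"
proof -
  have v: "(P, g <#\<^bsub>G\<^esub> P) \<in> coset_vertices G \<P>" using P g unfolding coset_vertices_def by blast
  have mem: "m \<otimes>\<^bsub>G\<^esub> h \<in> g <#\<^bsub>G\<^esub> P \<longleftrightarrow> m \<in> g <#\<^bsub>G\<^esub> P" if "m \<in> N" "h \<in> H" for m h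
    using mult_mem_coset_vertex_iff[OF v that] P(2) by simp
  show ?thesis
  proof
    show "g <#\<^bsub>G\<^esub> P \<subseteq> ((g <#\<^bsub>G\<^esub> P) \<inter> N) <#>\<^bsub>G\<^esub> H"
    proof
      fix x assume x: "x \<in> g <#\<^bsub>G\<^esub> P"
      obtain m h where mh: "m \<in> N" "h \<in> H" "x = m \<otimes>\<^bsub>G\<^esub> h"
        using N_H_decomposition[OF G.l_coset_carrier[OF x g subgroup_family[OF P(1)]]] .
      then have "m \<in> (g <#\<^bsub>G\<^esub> P) \<inter> N" using mem[OF mh(1,2)] x by simp
      with mh show "x \<in> ((g <#\<^bsub>G\<^esub> P) \<inter> N) <#>\<^bsub>G\<^esub> H" unfolding set_mult_def by blast
    qed
    show "((g <#\<^bsub>G\<^esub> P) \<inter> N) <#>\<^bsub>G\<^esub> H \<subseteq> g <#\<^bsub>G\<^esub> P"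
      using mem unfolding set_mult_def by blast
  qed
qed

definition vertex_map :: "'a set \<times> 'a set \<Rightarrow> ('b set \<times> 'b set) + ('a set \<times> 'a set)" where
  "vertex_map v =
     (if N \<subseteq> fst v then Inl (q ` fst v, q ` snd v) else Inr (fst v \<inter> N, snd v \<inter> N))"

definition vertex_unmap :: "('b set \<times> 'b set) + ('a set \<times> 'a set) \<Rightarrow> 'a set \<times> 'a set" where
  "vertex_unmap = case_sum (\<lambda>(A, B). (carrier G \<inter> q -` A, carrier G \<inter> q -` B))
                            (\<lambda>(A, B). (A <#>\<^bsub>G\<^esub> H, B <#>\<^bsub>G\<^esub> H))"

lemma vertex_unmap_vertex_map:
  assumes "v \<in> coset_vertices G \<P>"
  shows "vertex_unmap (vertex_map v) = v"
proof -
  obtain g P where gP: "g \<in> carrier G" "P \<in> \<P>" "v = (P, g <#\<^bsub>G\<^esub> P)" using assms by (rule coset_vertexE)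
  have P_coset: "P = \<one>\<^bsub>G\<^esub> <#\<^bsub>G\<^esub> P"
    using G.lcos_mult_one[OF subgroup.subset[OF subgroup_family[OF gP(2)]]] by simp
  show ?thesis
  proof (cases "N \<subseteq> P")
    case True
    have "P = carrier G \<inter> q -` q ` P" and "g <#\<^bsub>G\<^esub> P = carrier G \<inter> q -` q ` (g <#\<^bsub>G\<^esub> P)"
      using coset_eq_vimage_image[OF gP(2) True G.one_closed] coset_eq_vimage_image[OF gP(2) True gP(1)]
      unfolding P_coset[symmetric] by simp_all
    then show ?thesis using True unfolding gP(3) vertex_map_def vertex_unmap_def by simp
  next
    case False
    have "P = (P \<inter> N) <#>\<^bsub>G\<^esub> H" and "g <#\<^bsub>G\<^esub> P = ((g <#\<^bsub>G\<^esub> P) \<inter> N) <#>\<^bsub>G\<^esub> H"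
      using coset_eq_Int_N_mult_H[OF gP(2) False G.one_closed] coset_eq_Int_N_mult_H[OF gP(2) False gP(1)]
      unfolding P_coset[symmetric] by simp_all
    then show ?thesis using False unfolding gP(3) vertex_map_def vertex_unmap_def by simp
  qed
qed

lemma inj_on_vertex_map: "inj_on vertex_map (coset_vertices G \<P>)"
  using vertex_unmap_vertex_map by (rule inj_on_inverseI)

abbreviation quotient_family :: "'b set set" where
  "quotient_family \<equiv> {q ` P | P. P \<in> \<P> \<and> N \<subseteq> P}"

abbreviation kernel_family :: "'a set set" where
  "kernel_family \<equiv> {P \<inter> N | P. P \<in> \<P> \<and> S - N \<subseteq> P}"

lemma quotient_vertex:
  assumes "g \<in> carrier G" "P \<in> \<P>" "N \<subseteq> P"
  shows "(q ` P, q ` (g <#\<^bsub>G\<^esub> P)) \<in> coset_vertices Q quotient_family"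
proof -
  have "q ` (g <#\<^bsub>G\<^esub> P) = q g <#\<^bsub>Q\<^esub> q ` P"
    using image_l_coset[OF subgroup.subset[OF subgroup_family[OF assms(2)]] assms(1)] .
  moreover have "q g \<in> carrier Q" using assms(1) by simp
  ultimately show ?thesis using assms(2,3) unfolding coset_vertices_def by blast
qed

lemma kernel_vertex:
  assumes "n \<in> N" "P \<in> \<P>" "S - N \<subseteq> P"
  shows "(P \<inter> N, (n <#\<^bsub>G\<^esub> P) \<inter> N) \<in> coset_vertices (G\<lparr>carrier := N\<rparr>) kernel_family"
proof -
  have "(n <#\<^bsub>G\<^esub> P) \<inter> N = n <#\<^bsub>G\<lparr>carrier := N\<rparr>\<^esub> (P \<inter> N)"
    using G.l_coset_Int_subgroup[OF subgroup_family[OF assms(2)] N_subgroup assms(1)] by simp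
  moreover have "P \<inter> N \<in> kernel_family" using assms(2,3) by blast
  ultimately show ?thesis using assms(1) unfolding coset_vertices_def by auto
qed

lemma coset_meets_N:
  assumes "g \<in> carrier G" "P \<in> \<P>" "\<not> N \<subseteq> P"
  obtains n where "n \<in> N" "g <#\<^bsub>G\<^esub> P = n <#\<^bsub>G\<^esub> P"
proof -
  have "g \<in> ((g <#\<^bsub>G\<^esub> P) \<inter> N) <#>\<^bsub>G\<^esub> H"
    using G.lcos_self[OF assms(1) subgroup_family[OF assms(2)]] coset_eq_Int_N_mult_H[OF assms(2,3,1)]
    by simp
  then obtain n where "n \<in> g <#\<^bsub>G\<^esub> P" "n \<in> N" unfolding set_mult_def by blast
  then show ?thesis
    using that G.l_repr_independence[OF _ assms(1) subgroup_family[OF assms(2)]] by blast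
qed

lemma vertex_map_mem:
  assumes "v \<in> coset_vertices G \<P>"
  shows "vertex_map v \<in>
    Inl ` coset_vertices Q quotient_family \<union> Inr ` coset_vertices (G\<lparr>carrier := N\<rparr>) kernel_family"
proof -
  obtain g P where gP: "g \<in> carrier G" "P \<in> \<P>" "v = (P, g <#\<^bsub>G\<^esub> P)" using assms by (rule coset_vertexE)
  show ?thesis
  proof (cases "N \<subseteq> P")
    case True
    then show ?thesis using quotient_vertex[OF gP(1,2) True] gP(3) unfolding vertex_map_def by simp
  next
    case False
    obtain n where n: "n \<in> N" "g <#\<^bsub>G\<^esub> P = n <#\<^bsub>G\<^esub> P" using coset_meets_N[OF gP(1,2) False] .
    have "S - N \<subseteq> P" using dichotomy[OF gP(2)] False by blast
    then show ?thesis using kernel_vertex[OF n(1) gP(2)] False n(2) gP(3) unfolding vertex_map_def by simp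
  qed
qed

lemma quotient_vertex_in_image:
  assumes "a \<in> coset_vertices Q quotient_family"
  shows "Inl a \<in> vertex_map ` coset_vertices G \<P>"
proof -
  obtain y P where yP: "y \<in> carrier Q" "P \<in> \<P>" "N \<subseteq> P" "a = (q ` P, y <#\<^bsub>Q\<^esub> q ` P)"
    using assms unfolding coset_vertices_def by blast
  obtain g where g: "g \<in> carrier G" "y = q g" using yP(1) surj by auto
  have "Inl a = vertex_map (P, g <#\<^bsub>G\<^esub> P)"
    using yP g image_l_coset[OF subgroup.subset[OF subgroup_family[OF yP(2)]] g(1)]
    unfolding vertex_map_def by simp
  moreover have "(P, g <#\<^bsub>G\<^esub> P) \<in> coset_vertices G \<P>" using g(1) yP(2) unfolding coset_vertices_def by blast
  ultimately show ?thesis by blast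
qed

lemma kernel_vertex_in_image:
  assumes "b \<in> coset_vertices (G\<lparr>carrier := N\<rparr>) kernel_family"
  shows "Inr b \<in> vertex_map ` coset_vertices G \<P>"
proof -
  obtain n P where nP: "n \<in> N" "P \<in> \<P>" "S - N \<subseteq> P" "b = (P \<inter> N, n <#\<^bsub>G\<^esub> (P \<inter> N))"
    using assms unfolding coset_vertices_def by auto
  have "Inr b = vertex_map (P, n <#\<^bsub>G\<^esub> P)"
    using nP not_N_subset[OF nP(2,3)] G.l_coset_Int_subgroup[OF subgroup_family[OF nP(2)] N_subgroup nP(1)]
    unfolding vertex_map_def by simp
  moreover have "(P, n <#\<^bsub>G\<^esub> P) \<in> coset_vertices G \<P>"
    using subgroup.mem_carrier[OF N_subgroup nP(1)] nP(2) unfolding coset_vertices_def by blast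
  ultimately show ?thesis by blast
qed

lemma image_vertex_map:
  "vertex_map ` coset_vertices G \<P> =
     Inl ` coset_vertices Q quotient_family \<union> Inr ` coset_vertices (G\<lparr>carrier := N\<rparr>) kernel_family"
  using vertex_map_mem quotient_vertex_in_image kernel_vertex_in_image by blast

lemma Inter_coset_vertices_nonempty_iff:
  assumes \<sigma>: "\<sigma> \<subseteq> coset_vertices G \<P>"
  shows "\<Inter>(snd ` \<sigma>) \<noteq> {} \<longleftrightarrow>
    \<Inter>((\<lambda>v. q ` snd v) ` {v \<in> \<sigma>. N \<subseteq> fst v}) \<noteq> {} \<and>
    \<Inter>((\<lambda>v. snd v \<inter> N) ` {v \<in> \<sigma>. \<not> N \<subseteq> fst v}) \<noteq> {}"
    (is "?common \<longleftrightarrow> ?quotient \<and> ?kernel")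
proof
  assume ?common
  then obtain x where x: "\<And>v. v \<in> \<sigma> \<Longrightarrow> x \<in> snd v" by blast
  show "?quotient \<and> ?kernel"
  proof (cases "\<sigma> = {}")
    case False
    then obtain v0 where "v0 \<in> \<sigma>" by blast
    then have "x \<in> carrier G" using x snd_coset_vertex_subset \<sigma> by blast
    then obtain m h where mh: "m \<in> N" "h \<in> H" "x = m \<otimes>\<^bsub>G\<^esub> h" by (rule N_H_decomposition)
    have "q x \<in> \<Inter>((\<lambda>v. q ` snd v) ` {v \<in> \<sigma>. N \<subseteq> fst v})" using x by blast
    moreover have "m \<in> snd v" if "v \<in> \<sigma>" "\<not> N \<subseteq> fst v" for v
      using mult_mem_coset_vertex_iff[OF subsetD[OF \<sigma> that(1)] mh(1,2)] x[OF that(1)] mh(3) that(2)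
      by simp
    then have "m \<in> \<Inter>((\<lambda>v. snd v \<inter> N) ` {v \<in> \<sigma>. \<not> N \<subseteq> fst v})" using mh(1) by blast
    ultimately show ?thesis by blast
  qed simp
next
  assume "?quotient \<and> ?kernel"
  then have quotient: ?quotient and kernel: ?kernel by blast+
  have image_sub: "q ` snd v \<subseteq> carrier Q" if "v \<in> {v \<in> \<sigma>. N \<subseteq> fst v}" for v
  proof -
    have "snd v \<subseteq> carrier G" using snd_coset_vertex_subset that \<sigma> by blast
    then show ?thesis by auto
  qed
  obtain y where y: "y \<in> carrier Q" "\<And>v. v \<in> {v \<in> \<sigma>. N \<subseteq> fst v} \<Longrightarrow> y \<in> q ` snd v"
    using Inter_nonempty_obtain_in[OF quotient image_sub hom_closed[OF G.one_closed]] by blast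
  obtain m where m: "m \<in> N" "\<And>v. v \<in> {v \<in> \<sigma>. \<not> N \<subseteq> fst v} \<Longrightarrow> m \<in> snd v \<inter> N"
    using Inter_nonempty_obtain_in[OF kernel Int_lower2 subgroup.one_closed[OF N_subgroup]] by blast
  obtain h where h: "h \<in> H" "q h = y" using y(1) image_H_eq_carrier by (metis imageE)
  have "m \<otimes>\<^bsub>G\<^esub> h \<in> snd v" if "v \<in> \<sigma>" for v
    using mult_mem_coset_vertex_iff[OF subsetD[OF \<sigma> that] m(1) h(1)] y(2) m(2) h(2) that
    by simp
  then show ?common by blast
qed

lemma vimage_Inl_vertex_map:
  "Inl -` vertex_map ` \<sigma> = (\<lambda>v. (q ` fst v, q ` snd v)) ` {v \<in> \<sigma>. N \<subseteq> fst v}"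
  unfolding vertex_map_def by (auto split: if_splits)

lemma vimage_Inr_vertex_map:
  "Inr -` vertex_map ` \<sigma> = (\<lambda>v. (fst v \<inter> N, snd v \<inter> N)) ` {v \<in> \<sigma>. \<not> N \<subseteq> fst v}"
  unfolding vertex_map_def by (auto split: if_splits)

lemma vertex_map_simplex_iff:
  assumes \<sigma>: "\<sigma> \<subseteq> coset_vertices G \<P>"
  shows "\<sigma> \<in> coset_complex G \<P> \<longleftrightarrow> vertex_map ` \<sigma> \<in>
    simplicial_join (coset_complex Q quotient_family) (coset_complex (G\<lparr>carrier := N\<rparr>) kernel_family)"
proof -
  have fin: "finite \<sigma> \<longleftrightarrow> finite (Inl -` vertex_map ` \<sigma>) \<and> finite (Inr -` vertex_map ` \<sigma>)"
    using finite_image_iff[OF inj_on_subset[OF inj_on_vertex_map \<sigma>]] finite_iff_vimage_Inl_Inr by blast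
  have sub: "Inl -` vertex_map ` \<sigma> \<subseteq> coset_vertices Q quotient_family"
    "Inr -` vertex_map ` \<sigma> \<subseteq> coset_vertices (G\<lparr>carrier := N\<rparr>) kernel_family"
    using image_mono[OF \<sigma>, of vertex_map] unfolding image_vertex_map by auto
  have snd_vimage_Inl: "snd ` Inl -` vertex_map ` \<sigma> = (\<lambda>v. q ` snd v) ` {v \<in> \<sigma>. N \<subseteq> fst v}"
    unfolding vimage_Inl_vertex_map image_image by simp
  have snd_vimage_Inr: "snd ` Inr -` vertex_map ` \<sigma> = (\<lambda>v. snd v \<inter> N) ` {v \<in> \<sigma>. \<not> N \<subseteq> fst v}"
    unfolding vimage_Inr_vertex_map image_image by simp
  have "\<sigma> \<in> coset_complex G \<P> \<longleftrightarrow> finite \<sigma> \<and> \<sigma> \<noteq> {} \<and> \<Inter>(snd ` \<sigma>) \<noteq> {}"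
    using \<sigma> unfolding coset_complex_eq by blast
  also have "\<dots> \<longleftrightarrow> vertex_map ` \<sigma> \<noteq> {} \<and>
      (finite (Inl -` vertex_map ` \<sigma>) \<and> \<Inter>(snd ` Inl -` vertex_map ` \<sigma>) \<noteq> {}) \<and>
      (finite (Inr -` vertex_map ` \<sigma>) \<and> \<Inter>(snd ` Inr -` vertex_map ` \<sigma>) \<noteq> {})"
    unfolding fin Inter_coset_vertices_nonempty_iff[OF \<sigma>] snd_vimage_Inl snd_vimage_Inr by blast
  also have "\<dots> \<longleftrightarrow> vertex_map ` \<sigma> \<in>
      simplicial_join (coset_complex Q quotient_family) (coset_complex (G\<lparr>carrier := N\<rparr>) kernel_family)"
    unfolding simplicial_join_def insert_empty_coset_complex using sub by auto
  finally show ?thesis .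
qed

lemma image_coset_complex_vertex_map:
  "(`) vertex_map ` coset_complex G \<P> =
     simplicial_join (coset_complex Q quotient_family) (coset_complex (G\<lparr>carrier := N\<rparr>) kernel_family)"
proof (rule image_family_eqI)
  show "\<Union>(coset_complex G \<P>) \<subseteq> coset_vertices G \<P>" unfolding coset_complex_eq by blast
  show "\<Union>(simplicial_join (coset_complex Q quotient_family) (coset_complex (G\<lparr>carrier := N\<rparr>) kernel_family))
      \<subseteq> vertex_map ` coset_vertices G \<P>"
  proof
    fix t assume "t \<in> \<Union>(simplicial_join (coset_complex Q quotient_family)
                                         (coset_complex (G\<lparr>carrier := N\<rparr>) kernel_family))"
    then obtain s where s: "s \<in> simplicial_join (coset_complex Q quotient_family)
                                  (coset_complex (G\<lparr>carrier := N\<rparr>) kernel_family)" "t \<in> s"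
      by blast
    then have "Inl -` s \<subseteq> coset_vertices Q quotient_family"
        "Inr -` s \<subseteq> coset_vertices (G\<lparr>carrier := N\<rparr>) kernel_family"
      unfolding simplicial_join_def insert_empty_coset_complex by auto
    then show "t \<in> vertex_map ` coset_vertices G \<P>"
      using s(2) unfolding image_vertex_map by (cases t) auto
  qed
qed (rule vertex_map_simplex_iff)

end

theorem corollary3p20:
  fixes G :: "('a, 'm) monoid_scheme" and Q :: "('b, 'n) monoid_scheme"
    and q :: "'a \<Rightarrow> 'b" and N S :: "'a set" and \<P> :: "'a set set"
  assumes "group G" and "group Q"
    and "q \<in> epi G Q"
    and "N = kernel G Q q"
    and "S \<subseteq> carrier G" and "generate G S = carrier G"
    and "\<And>P. P \<in> \<P> \<Longrightarrow> subgroup P G \<and> P \<noteq> carrier G"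
    and "\<And>P. P \<in> \<P> \<Longrightarrow> N \<subseteq> P \<or> S - N \<subseteq> P"
  shows "geom_realisation (coset_complex G \<P>) homotopy_equivalent_space
         geom_realisation (simplicial_join
            (coset_complex Q {q ` P | P. P \<in> \<P> \<and> N \<subseteq> P})
            (coset_complex (G\<lparr>carrier := N\<rparr>) {P \<inter> N | P. P \<in> \<P> \<and> S - N \<subseteq> P}))"
proof -
  interpret dichotomous_family G Q q N S \<P>
    using assms unfolding dichotomous_family_def dichotomous_family_axioms_def group_hom_def
      group_hom_axioms_def epi_def by blast
  have "inj_on vertex_map (\<Union>(coset_complex G \<P>))"
    using inj_on_vertex_map by (rule inj_on_subset) (auto simp: coset_complex_eq)
  then have "geom_realisation (coset_complex G \<P>) homeomorphic_space
      geom_realisation ((`) vertex_map ` coset_complex G \<P>)"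
    using coset_complex_downward_closed by (rule homeomorphic_geom_realisation_image[rotated])
  then show ?thesis
    unfolding image_coset_complex_vertex_map by (rule homeomorphic_imp_homotopy_equivalent_space)
qed

end
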